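(* Let $s_{\mathrm{vi}}(n)$ denote the number of unlabeled (i.e., up to isomorphism) vertically indecomposable semimodular lattices with $n$ elements. Then there exists $n_0$ such that $s_{\mathrm{vi}}(n) \ge 2.6797^n$ for all $n \ge n_0$.
   Context: All lattices are finite and nonempty, and are counted up to isomorphism. Semimodular means upper semimodular. A knot of a lattice $X$ is an element distinct from the top and bottom of $X$ that is comparable to every element of $X$. A lattice is vertically indecomposable if it has no knot. *)

theory Defs
  imports Complex_Main
begin

text \<open>A finite lattice with n elements is represented by an order relation
  le on the carrier {..<n} (the relation is required to vanish outside the carrier,
  so that there are only finitely many such representations).\<close>

definition carrier_of :: "nat \<Rightarrow> nat set" where
  "carrier_of n = {..<n}"

definition is_sup :: "(nat \<Rightarrow> nat \<Rightarrow> bool) \<Rightarrow> nat set \<Rightarrow> nat \<Rightarrow> nat \<Rightarrow> nat \<Rightarrow> bool" where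
  "is_sup le A a b j \<longleftrightarrow> j \<in> A \<and> le a j \<and> le b j \<and> (\<forall>u\<in>A. le a u \<and> le b u \<longrightarrow> le j u)"

definition is_inf :: "(nat \<Rightarrow> nat \<Rightarrow> bool) \<Rightarrow> nat set \<Rightarrow> nat \<Rightarrow> nat \<Rightarrow> nat \<Rightarrow> bool" where
  "is_inf le A a b m \<longleftrightarrow> m \<in> A \<and> le m a \<and> le m b \<and> (\<forall>u\<in>A. le u a \<and> le u b \<longrightarrow> le u m)"

definition lattice_on :: "nat \<Rightarrow> (nat \<Rightarrow> nat \<Rightarrow> bool) \<Rightarrow> bool" where
  "lattice_on n le \<longleftrightarrow> 0 < n
     \<and> (\<forall>x y. le x y \<longrightarrow> x \<in> carrier_of n \<and> y \<in> carrier_of n)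
     \<and> (\<forall>x\<in>carrier_of n. le x x)
     \<and> (\<forall>x\<in>carrier_of n. \<forall>y\<in>carrier_of n. le x y \<and> le y x \<longrightarrow> x = y)
     \<and> (\<forall>x\<in>carrier_of n. \<forall>y\<in>carrier_of n. \<forall>z\<in>carrier_of n. le x y \<and> le y z \<longrightarrow> le x z)
     \<and> (\<forall>a\<in>carrier_of n. \<forall>b\<in>carrier_of n. \<exists>j. is_sup le (carrier_of n) a b j)
     \<and> (\<forall>a\<in>carrier_of n. \<forall>b\<in>carrier_of n. \<exists>m. is_inf le (carrier_of n) a b m)"

definition covers :: "(nat \<Rightarrow> nat \<Rightarrow> bool) \<Rightarrow> nat set \<Rightarrow> nat \<Rightarrow> nat \<Rightarrow> bool" where
  "covers le A x y \<longleftrightarrow> x \<in> A \<and> y \<in> A \<and> le x y \<and> x \<noteq> y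
     \<and> \<not> (\<exists>z\<in>A. le x z \<and> le z y \<and> z \<noteq> x \<and> z \<noteq> y)"

definition semimodular_on :: "nat \<Rightarrow> (nat \<Rightarrow> nat \<Rightarrow> bool) \<Rightarrow> bool" where
  "semimodular_on n le \<longleftrightarrow>
     (\<forall>a\<in>carrier_of n. \<forall>b\<in>carrier_of n. \<forall>m j.
        is_inf le (carrier_of n) a b m \<and> is_sup le (carrier_of n) a b j \<and> covers le (carrier_of n) m a
        \<longrightarrow> covers le (carrier_of n) b j)"

definition is_top :: "(nat \<Rightarrow> nat \<Rightarrow> bool) \<Rightarrow> nat set \<Rightarrow> nat \<Rightarrow> bool" where
  "is_top le A t \<longleftrightarrow> t \<in> A \<and> (\<forall>y\<in>A. le y t)"

definition is_bot :: "(nat \<Rightarrow> nat \<Rightarrow> bool) \<Rightarrow> nat set \<Rightarrow> nat \<Rightarrow> bool" where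
  "is_bot le A b \<longleftrightarrow> b \<in> A \<and> (\<forall>y\<in>A. le b y)"

definition is_knot :: "nat \<Rightarrow> (nat \<Rightarrow> nat \<Rightarrow> bool) \<Rightarrow> nat \<Rightarrow> bool" where
  "is_knot n le x \<longleftrightarrow> x \<in> carrier_of n \<and> \<not> is_top le (carrier_of n) x \<and> \<not> is_bot le (carrier_of n) x
     \<and> (\<forall>y\<in>carrier_of n. le x y \<or> le y x)"

definition vert_indecomposable :: "nat \<Rightarrow> (nat \<Rightarrow> nat \<Rightarrow> bool) \<Rightarrow> bool" where
  "vert_indecomposable n le \<longleftrightarrow> \<not> (\<exists>x. is_knot n le x)"

definition lat_iso_rel :: "nat \<Rightarrow> ((nat \<Rightarrow> nat \<Rightarrow> bool) \<times> (nat \<Rightarrow> nat \<Rightarrow> bool)) set" where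
  "lat_iso_rel n = {(le1, le2). \<exists>f. bij_betw f (carrier_of n) (carrier_of n)
      \<and> (\<forall>x\<in>carrier_of n. \<forall>y\<in>carrier_of n. le1 x y \<longleftrightarrow> le2 (f x) (f y))}"

definition s_vi :: "nat \<Rightarrow> nat" where
  "s_vi n = card ({le. lattice_on n le \<and> semimodular_on n le \<and> vert_indecomposable n le}
                   // lat_iso_rel n)"

end

theory Submission
  imports Defs "HOL-Library.FuncSet"
begin

text \<open>Adjoining a bottom and a top to an incidence structure of points and lines in which
  any two points lie on a unique line gives a semimodular lattice of length 3, and it is
  vertically indecomposable as soon as there are two points and two lines. A \<open>q \<times> q\<close> partial
  Latin square \<open>c\<close> over \<open>m = 3 q\<close> symbols yields such a structure on points \<open>X\<^sub>i\<close>, \<open>Y\<^sub>j\<close>,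
  \<open>Z\<^sub>k\<close> with the lines \<open>{X\<^sub>i, Y\<^bsub>c i k\<^esub>, Z\<^sub>k}\<close>, and padding lines bring the number of elements to
  any \<open>n\<close> between \<open>8 q\<^sup>2\<close> and \<open>9 q\<^sup>2\<close>. The lattice together with the positions of its \<open>5 q\<close>
  points determines \<open>c\<close>, so an isomorphism class contains at most \<open>n ^ (5 q)\<close> of these
  lattices, while there are at least \<open>q ^ (q\<^sup>2)\<close> such arrays. Hence
  \<open>s_vi n \<ge> q ^ (q\<^sup>2) / n ^ (5 q) \<ge> 3 ^ n\<close> for large \<open>n\<close>.\<close>

section \<open>Lattices of linear spaces\<close>

definition incidence_order ::
    "nat \<Rightarrow> nat \<Rightarrow> nat \<Rightarrow> (nat \<Rightarrow> bool) \<Rightarrow> (nat \<Rightarrow> nat \<Rightarrow> bool) \<Rightarrow> nat \<Rightarrow> nat \<Rightarrow> bool" where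
  "incidence_order n b t point inc x y \<longleftrightarrow> x < n \<and> y < n \<and>
     (x = y \<or> x = b \<or> y = t \<or> (point x \<and> inc x y \<and> y \<noteq> b \<and> y \<noteq> t \<and> \<not> point y))"

text \<open>Lines are only required to carry one point, so this is slightly more general than a
  linear space; the resulting lattice is semimodular of length 3 but need not be atomistic.\<close>

locale linear_space =
  fixes n b t :: nat and point :: "nat \<Rightarrow> bool" and inc :: "nat \<Rightarrow> nat \<Rightarrow> bool"
  assumes bot_less: "b < n" and top_less: "t < n" and bot_ne_top: "b \<noteq> t"
    and point_range: "\<And>x. point x \<Longrightarrow> x < n \<and> x \<noteq> b \<and> x \<noteq> t"
    and some_point_on: "\<And>l. l < n \<Longrightarrow> l \<noteq> b \<Longrightarrow> l \<noteq> t \<Longrightarrow> \<not> point l \<Longrightarrow> \<exists>p. point p \<and> inc p l"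
    and joining_line: "\<And>p p'. point p \<Longrightarrow> point p' \<Longrightarrow> p \<noteq> p' \<Longrightarrow>
      \<exists>!l. l < n \<and> l \<noteq> b \<and> l \<noteq> t \<and> \<not> point l \<and> inc p l \<and> inc p' l"
    and two_points: "\<exists>p p'. point p \<and> point p' \<and> p \<noteq> p'"
    and two_lines: "\<exists>l l'. l < n \<and> l \<noteq> b \<and> l \<noteq> t \<and> \<not> point l \<and>
      l' < n \<and> l' \<noteq> b \<and> l' \<noteq> t \<and> \<not> point l' \<and> l \<noteq> l'"
begin

definition line :: "nat \<Rightarrow> bool" where
  "line l \<longleftrightarrow> l < n \<and> l \<noteq> b \<and> l \<noteq> t \<and> \<not> point l"

abbreviation le :: "nat \<Rightarrow> nat \<Rightarrow> bool" where
  "le \<equiv> incidence_order n b t point inc"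

lemma carrier_eq: "carrier_of n = {..<n}"
  by (simp add: carrier_of_def)

lemma le_iff: "le x y \<longleftrightarrow> x < n \<and> y < n \<and> (x = y \<or> x = b \<or> y = t \<or> (point x \<and> line y \<and> inc x y))"
  unfolding incidence_order_def line_def by auto

lemma element_cases: "x < n \<Longrightarrow> x = b \<or> x = t \<or> point x \<or> line x"
  unfolding line_def by auto

lemma pointD: "point x \<Longrightarrow> x < n" "point x \<Longrightarrow> x \<noteq> b" "point x \<Longrightarrow> x \<noteq> t"
  using point_range by auto

lemma lineD: "line x \<Longrightarrow> x < n" "line x \<Longrightarrow> x \<noteq> b" "line x \<Longrightarrow> x \<noteq> t" "line x \<Longrightarrow> \<not> point x"
  unfolding line_def by auto

lemma line_has_point: "line l \<Longrightarrow> \<exists>p. point p \<and> inc p l"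
  using some_point_on unfolding line_def by auto

lemma joining_line_ex: "point p \<Longrightarrow> point p' \<Longrightarrow> p \<noteq> p' \<Longrightarrow> \<exists>l. line l \<and> inc p l \<and> inc p' l"
  using joining_line unfolding line_def by blast

lemma joining_line_unique: "point p \<Longrightarrow> point p' \<Longrightarrow> p \<noteq> p' \<Longrightarrow> line l \<Longrightarrow> inc p l \<Longrightarrow> inc p' l \<Longrightarrow>
    line l' \<Longrightarrow> inc p l' \<Longrightarrow> inc p' l' \<Longrightarrow> l = l'"
  using joining_line unfolding line_def by blast

lemma le_refl: "x < n \<Longrightarrow> le x x"
  by (simp add: le_iff)

lemma le_antisym: "le x y \<Longrightarrow> le y x \<Longrightarrow> x = y"
  unfolding le_iff using bot_ne_top pointD lineD by metis

lemma le_trans: "le x y \<Longrightarrow> le y z \<Longrightarrow> le x z"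
  unfolding le_iff using bot_ne_top pointD lineD by metis

text \<open>The join of incomparable elements is their joining line if both are points, and \<open>t\<close> otherwise.\<close>

lemma sup_exists:
  assumes x: "x < n" and y: "y < n"
  shows "\<exists>j. is_sup le (carrier_of n) x y j"
proof (cases "le x y \<or> le y x")
  case True
  then show ?thesis unfolding is_sup_def carrier_eq using x y le_refl le_trans by blast
next
  case False
  then have nxy: "\<not> le x y" and nyx: "\<not> le y x" by auto
  have common_ub: "u = t \<or> (point x \<and> point y \<and> line u \<and> inc x u \<and> inc y u)"
    if "le x u" "le y u" for u
    using that nxy nyx le_iff x y by (metis le_refl)
  show ?thesis
  proof (cases "point x \<and> point y")
    case True
    then have "x \<noteq> y" using nxy le_refl x by auto
    then obtain l where l: "line l" "inc x l" "inc y l" using joining_line_ex True by blast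
    have "is_sup le {..<n} x y l"
      unfolding is_sup_def
    proof (intro conjI ballI impI)
      show "l \<in> {..<n}" "le x l" "le y l" using l True x y lineD le_iff by auto
      fix u assume "u \<in> {..<n}" "le x u \<and> le y u"
      then show "le l u"
        using common_ub joining_line_unique[OF _ _ \<open>x \<noteq> y\<close> l] True l le_refl le_iff lineD(1) top_less
        by metis
    qed
    then show ?thesis unfolding carrier_eq by blast
  next
    case False
    have "is_sup le {..<n} x y t"
      unfolding is_sup_def using False common_ub x y top_less le_iff le_refl by auto
    then show ?thesis unfolding carrier_eq by blast
  qed
qed

text \<open>Dually, the meet of incomparable elements is the common point of two lines, if any,
  and \<open>b\<close> otherwise.\<close>

lemma inf_exists:
  assumes x: "x < n" and y: "y < n"
  shows "\<exists>m. is_inf le (carrier_of n) x y m"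
proof (cases "le x y \<or> le y x")
  case True
  then show ?thesis unfolding is_inf_def carrier_eq using x y le_refl le_trans by blast
next
  case False
  then have nxy: "\<not> le x y" and nyx: "\<not> le y x" by auto
  have xy: "x \<noteq> y" using nxy le_refl x by auto
  have common_lb: "u = b \<or> (point u \<and> line x \<and> line y \<and> inc u x \<and> inc u y)"
    if "le u x" "le u y" for u
    using that nxy nyx le_iff x y by (metis le_refl)
  show ?thesis
  proof (cases "\<exists>p. point p \<and> line x \<and> line y \<and> inc p x \<and> inc p y")
    case True
    then obtain p where p: "point p" "line x" "line y" "inc p x" "inc p y" by blast
    have "is_inf le {..<n} x y p"
      unfolding is_inf_def
    proof (intro conjI ballI impI)
      show "p \<in> {..<n}" "le p x" "le p y" using p x y pointD le_iff by auto
      fix u assume "u \<in> {..<n}" "le u x \<and> le u y"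
      then show "le u p"
        using common_lb joining_line_unique[OF _ p(1) _ p(2) _ p(4) p(3) _ p(5)] xy p le_refl le_iff
          pointD(1) bot_less by metis
    qed
    then show ?thesis unfolding carrier_eq by blast
  next
    case False
    have "is_inf le {..<n} x y b"
      unfolding is_inf_def using False common_lb x y bot_less le_iff le_refl by auto
    then show ?thesis unfolding carrier_eq by blast
  qed
qed

lemma lattice_on_le: "lattice_on n le"
  unfolding lattice_on_def
proof (intro conjI allI impI ballI)
  fix x y assume "le x y"
  then show "x \<in> carrier_of n" "y \<in> carrier_of n" using le_iff carrier_eq by auto
qed (use bot_less le_refl le_antisym le_trans sup_exists inf_exists in \<open>auto simp: carrier_eq\<close>)

lemma covers_point_line:
  assumes p: "point p" and l: "line l" and i: "inc p l"
  shows "covers le (carrier_of n) p l"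
proof -
  have "\<not> le p z \<or> \<not> le z l" if "z \<noteq> p" "z \<noteq> l" for z
    using that p l lineD pointD bot_ne_top unfolding le_iff by metis
  then show ?thesis unfolding covers_def carrier_eq using p l i pointD lineD le_iff by auto
qed

lemma covers_line_top: "line l \<Longrightarrow> covers le (carrier_of n) l t"
  unfolding covers_def carrier_eq le_iff using pointD lineD top_less by (metis lessThan_iff)

lemma not_covers_bot_line: "line l \<Longrightarrow> \<not> covers le (carrier_of n) b l"
proof
  assume l: "line l" and c: "covers le (carrier_of n) b l"
  obtain p where "point p" "inc p l" using line_has_point l by blast
  then have "le b p" "le p l" "p \<noteq> b" "p \<noteq> l" "p \<in> {..<n}" using l pointD lineD le_iff bot_less by auto
  then show False using c unfolding covers_def carrier_eq by blast
qed

text \<open>If \<open>a \<sqinter> c\<close> is covered by \<open>a\<close> for incomparable \<open>a\<close>, \<open>c\<close>, then either both are points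
  and their join is the joining line, or \<open>c\<close> is a line and their join is \<open>t\<close>; a line \<open>a\<close>
  and a point \<open>c\<close> cannot occur, as then \<open>a \<sqinter> c = b\<close> is not covered by \<open>a\<close>.\<close>

lemma covers_sup_incomparable:
  assumes a: "a < n" and c: "c < n" and nac: "\<not> le a c" and nca: "\<not> le c a"
    and inf: "is_inf le (carrier_of n) a c m" and sup: "is_sup le (carrier_of n) a c j"
    and cov: "covers le (carrier_of n) m a"
  shows "covers le (carrier_of n) c j"
proof -
  have ma: "le m a" "m \<noteq> a" using cov unfolding covers_def by auto
  have mc: "le m c" using inf unfolding is_inf_def by auto
  have ja: "le a j" and jc: "le c j" and jmin: "\<And>u. u < n \<Longrightarrow> le a u \<Longrightarrow> le c u \<Longrightarrow> le j u"
    using sup unfolding is_sup_def carrier_eq by auto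
  have ab: "a \<noteq> b" "a \<noteq> t" "c \<noteq> b" "c \<noteq> t" using nac nca le_iff a c by auto
  have ka: "point a \<or> line a" and kc: "point c \<or> line c" using element_cases ab a c by auto
  have ac: "a \<noteq> c" using nac le_refl a by auto
  consider "point a" "point c" | "line a" "point c" | "line c" using ka kc by blast
  then show ?thesis
  proof cases
    case 1
    then obtain l where l: "line l" "inc a l" "inc c l" using joining_line_ex ac by blast
    have "le a l" "le c l" using l 1 le_iff lineD pointD by auto
    then have "le j l" using jmin lineD(1)[OF l(1)] by blast
    moreover have "j \<noteq> b" using jc ab le_iff bot_ne_top lineD(2) by metis
    moreover have "j \<noteq> c" using ja nac by auto
    moreover have "\<not> point j" using ja jc ac 1 le_iff lineD pointD by metis
    ultimately have "j = l" using le_iff lineD(3)[OF l(1)] by auto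
    then show ?thesis using covers_point_line 1 l by auto
  next
    case 2
    have "m = b" using mc ma nca le_iff 2 lineD pointD by metis
    then show ?thesis using cov not_covers_bot_line 2 by auto
  next
    case 3
    have "j = t" using jc ja nac le_iff 3 lineD by metis
    then show ?thesis using covers_line_top 3 by auto
  qed
qed

lemma semimodular_on_le: "semimodular_on n le"
  unfolding semimodular_on_def
proof (intro ballI allI impI)
  fix a c m j
  assume "a \<in> carrier_of n" "c \<in> carrier_of n"
    and H: "is_inf le (carrier_of n) a c m \<and> is_sup le (carrier_of n) a c j \<and> covers le (carrier_of n) m a"
  then have a: "a < n" and c: "c < n" and inf: "is_inf le (carrier_of n) a c m"
    and sup: "is_sup le (carrier_of n) a c j" and cov: "covers le (carrier_of n) m a"
    using carrier_eq by auto
  have ma: "le m a" "m \<noteq> a" using cov unfolding covers_def by auto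
  consider "le a c" | "le c a" | "\<not> le a c" "\<not> le c a" by blast
  then show "covers le (carrier_of n) c j"
  proof cases
    case 1
    have "le a m" using inf 1 le_refl a unfolding is_inf_def carrier_eq by auto
    then show ?thesis using ma le_antisym by auto
  next
    case 2
    have "m = c" using inf 2 le_refl c le_antisym unfolding is_inf_def carrier_eq by auto
    moreover have "j = a" using sup 2 le_refl a le_antisym unfolding is_sup_def carrier_eq by auto
    ultimately show ?thesis using cov by simp
  next
    case 3
    then show ?thesis using covers_sup_incomparable a c inf sup cov by blast
  qed
qed

lemma vert_indecomposable_le: "vert_indecomposable n le"
  unfolding vert_indecomposable_def
proof
  assume "\<exists>x. is_knot n le x"
  then obtain x where k: "is_knot n le x" by blast
  have xn: "x < n" and cmp: "\<And>y. y < n \<Longrightarrow> le x y \<or> le y x"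
    using k unfolding is_knot_def carrier_eq by auto
  have "x \<noteq> t" "x \<noteq> b"
    using k top_less bot_less unfolding is_knot_def is_top_def is_bot_def carrier_eq le_iff by auto
  then have "point x \<or> line x" using element_cases xn by auto
  then show False
  proof
    assume "point x"
    moreover obtain p where "point p" "p \<noteq> x" using two_points by blast
    ultimately show False using cmp[of p] pointD lineD le_iff by metis
  next
    assume "line x"
    moreover obtain l where "line l" "l \<noteq> x" using two_lines unfolding line_def by blast
    ultimately show False using cmp[of l] pointD lineD le_iff by metis
  qed
qed

end

section \<open>The linear space of a partial Latin square\<close>

definition latin_square :: "nat \<Rightarrow> nat \<Rightarrow> (nat \<Rightarrow> nat \<Rightarrow> nat) \<Rightarrow> bool" where
  "latin_square q m c \<longleftrightarrow> (\<forall>i<q. \<forall>k<q. c i k < m)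
     \<and> (\<forall>i<q. inj_on (c i) {..<q}) \<and> (\<forall>k<q. inj_on (\<lambda>i. c i k) {..<q})"

text \<open>The linear space of a Latin square \<open>c\<close>: points \<open>X\<^sub>i\<close>, \<open>Y\<^sub>j\<close>, \<open>Z\<^sub>k\<close> (\<open>i, k < q\<close>, \<open>j < m\<close>);
  three long lines through all \<open>X\<close>-, all \<open>Y\<close>-, all \<open>Z\<close>-points; for every \<open>i, k\<close> the line
  \<open>{X\<^sub>i, Y\<^bsub>c i k\<^esub>, Z\<^sub>k}\<close>; two-point lines joining the remaining pairs \<open>X\<^sub>i Y\<^sub>j\<close> and
  \<open>Y\<^sub>j Z\<^sub>k\<close>; and \<open>p\<close> padding lines through \<open>X\<^sub>0\<close> alone, which only serve to adjust the size.\<close>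

datatype elem = Bot | Top | PtX nat | PtY nat | PtZ nat | LnX | LnY | LnZ
  | LnXZ nat nat | LnXY nat nat | LnYZ nat nat | LnPad nat

fun in_range :: "nat \<Rightarrow> nat \<Rightarrow> nat \<Rightarrow> elem \<Rightarrow> bool" where
  "in_range q m p Bot = True"
| "in_range q m p Top = True"
| "in_range q m p (PtX i) = (i < q)"
| "in_range q m p (PtY j) = (j < m)"
| "in_range q m p (PtZ k) = (k < q)"
| "in_range q m p LnX = True"
| "in_range q m p LnY = True"
| "in_range q m p LnZ = True"
| "in_range q m p (LnXZ i k) = (i < q \<and> k < q)"
| "in_range q m p (LnXY i j) = (i < q \<and> j < m)"
| "in_range q m p (LnYZ j k) = (j < m \<and> k < q)"
| "in_range q m p (LnPad l) = (l < p)"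

fun is_point :: "elem \<Rightarrow> bool" where
  "is_point (PtX i) = True"
| "is_point (PtY j) = True"
| "is_point (PtZ k) = True"
| "is_point _ = False"

definition is_line :: "elem \<Rightarrow> bool" where
  "is_line e \<longleftrightarrow> e \<noteq> Bot \<and> e \<noteq> Top \<and> \<not> is_point e"

fun incident :: "(nat \<Rightarrow> nat \<Rightarrow> nat) \<Rightarrow> nat \<Rightarrow> elem \<Rightarrow> elem \<Rightarrow> bool" where
  "incident c q (PtX i) LnX = True"
| "incident c q (PtY j) LnY = True"
| "incident c q (PtZ k) LnZ = True"
| "incident c q (PtX i) (LnXZ i' k) = (i = i')"
| "incident c q (PtY j) (LnXZ i k) = (j = c i k)"
| "incident c q (PtZ k) (LnXZ i k') = (k = k')"
| "incident c q (PtX i) (LnXY i' j) = (i = i')"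
| "incident c q (PtY j) (LnXY i j') = (j = j' \<and> (\<forall>k<q. c i k \<noteq> j))"
| "incident c q (PtY j) (LnYZ j' k) = (j = j' \<and> (\<forall>i<q. c i k \<noteq> j))"
| "incident c q (PtZ k) (LnYZ j k') = (k = k')"
| "incident c q (PtX i) (LnPad l) = (i = 0)"
| "incident c q _ _ = False"

lemma incident_PtX_cases:
  "incident c q (PtX i) e \<Longrightarrow> e = LnX \<or> (\<exists>k. e = LnXZ i k) \<or> (\<exists>j. e = LnXY i j) \<or> (\<exists>l. e = LnPad l \<and> i = 0)"
  by (cases e) auto

lemma incident_PtY_cases: "incident c q (PtY j) e \<Longrightarrow> e = LnY \<or> (\<exists>i k. e = LnXZ i k \<and> j = c i k) \<or>
   (\<exists>i. e = LnXY i j \<and> (\<forall>k<q. c i k \<noteq> j)) \<or> (\<exists>k. e = LnYZ j k \<and> (\<forall>i<q. c i k \<noteq> j))"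
  by (cases e) auto

lemma incident_PtZ_cases: "incident c q (PtZ k) e \<Longrightarrow> e = LnZ \<or> (\<exists>i. e = LnXZ i k) \<or> (\<exists>j. e = LnYZ j k)"
  by (cases e) auto

lemma is_point_cases: "is_point e \<Longrightarrow> (\<exists>i. e = PtX i) \<or> (\<exists>j. e = PtY j) \<or> (\<exists>k. e = PtZ k)"
  by (cases e) auto

lemma common_line_unique:
  assumes c: "latin_square q m c" and p1: "is_point e1" and p2: "is_point e2" and ne: "e1 \<noteq> e2"
    and a: "in_range q m p e" "incident c q e1 e" "incident c q e2 e"
    and b: "in_range q m p e'" "incident c q e1 e'" "incident c q e2 e'"
  shows "e = e'"
proof -
  have row: "\<And>i k k'. i < q \<Longrightarrow> k < q \<Longrightarrow> k' < q \<Longrightarrow> c i k = c i k' \<Longrightarrow> k = k'"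
    and col: "\<And>i i' k. i < q \<Longrightarrow> i' < q \<Longrightarrow> k < q \<Longrightarrow> c i k = c i' k \<Longrightarrow> i = i'"
    using c unfolding latin_square_def inj_on_def by auto
  note X = incident_PtX_cases[of c q _ e] incident_PtX_cases[of c q _ e']
  note Y = incident_PtY_cases[of c q _ e] incident_PtY_cases[of c q _ e']
  note Z = incident_PtZ_cases[of c q _ e] incident_PtZ_cases[of c q _ e']
  from is_point_cases[OF p1] is_point_cases[OF p2] show ?thesis
  proof (elim disjE exE)
    fix i i' assume "e1 = PtX i" "e2 = PtX i'"
    then show ?thesis using a b ne X[of i] X[of i'] by auto
  next
    fix i j assume "e1 = PtX i" "e2 = PtY j"
    then show ?thesis using a b X[of i] row by auto
  next
    fix i k assume "e1 = PtX i" "e2 = PtZ k"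
    then show ?thesis using a b X[of i] by auto
  next
    fix j i assume "e1 = PtY j" "e2 = PtX i"
    then show ?thesis using a b X[of i] row by auto
  next
    fix j j' assume "e1 = PtY j" "e2 = PtY j'"
    then show ?thesis using a b ne Y[of j] Y[of j'] by auto
  next
    fix j k assume "e1 = PtY j" "e2 = PtZ k"
    then show ?thesis using a b Z[of k] col by auto
  next
    fix k i assume "e1 = PtZ k" "e2 = PtX i"
    then show ?thesis using a b X[of i] by auto
  next
    fix k j assume "e1 = PtZ k" "e2 = PtY j"
    then show ?thesis using a b Z[of k] col by auto
  next
    fix k k' assume "e1 = PtZ k" "e2 = PtZ k'"
    then show ?thesis using a b ne Z[of k] Z[of k'] by auto
  qed
qed

lemma line_through_PtX_PtY:
  assumes "i < q" "j < m"
  shows "\<exists>e. in_range q m p e \<and> is_line e \<and> incident c q (PtX i) e \<and> incident c q (PtY j) e"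
proof (cases "\<exists>k<q. c i k = j")
  case True
  then obtain k where "k < q" "c i k = j" by auto
  then show ?thesis using assms by (intro exI[of _ "LnXZ i k"]) (auto simp: is_line_def)
next
  case False
  then show ?thesis using assms by (intro exI[of _ "LnXY i j"]) (auto simp: is_line_def)
qed

lemma line_through_PtY_PtZ:
  assumes "j < m" "k < q"
  shows "\<exists>e. in_range q m p e \<and> is_line e \<and> incident c q (PtY j) e \<and> incident c q (PtZ k) e"
proof (cases "\<exists>i<q. c i k = j")
  case True
  then obtain i where "i < q" "c i k = j" by auto
  then show ?thesis using assms by (intro exI[of _ "LnXZ i k"]) (auto simp: is_line_def)
next
  case False
  then show ?thesis using assms by (intro exI[of _ "LnYZ j k"]) (auto simp: is_line_def)
qed

lemma common_line_exists:
  assumes "in_range q m p e1" "in_range q m p e2" "is_point e1" "is_point e2"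
  shows "\<exists>e. in_range q m p e \<and> is_line e \<and> incident c q e1 e \<and> incident c q e2 e"
  using is_point_cases[OF assms(3)] is_point_cases[OF assms(4)]
proof (elim disjE exE)
  fix i i' assume "e1 = PtX i" "e2 = PtX i'"
  then show ?thesis by (intro exI[of _ LnX]) (auto simp: is_line_def)
next
  fix i j assume "e1 = PtX i" "e2 = PtY j"
  then show ?thesis using assms line_through_PtX_PtY by auto
next
  fix i k assume "e1 = PtX i" "e2 = PtZ k"
  then show ?thesis using assms by (intro exI[of _ "LnXZ i k"]) (auto simp: is_line_def)
next
  fix j i assume "e1 = PtY j" "e2 = PtX i"
  then show ?thesis using assms line_through_PtX_PtY[of i q j m p c] by auto
next
  fix j j' assume "e1 = PtY j" "e2 = PtY j'"
  then show ?thesis by (intro exI[of _ LnY]) (auto simp: is_line_def)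
next
  fix j k assume "e1 = PtY j" "e2 = PtZ k"
  then show ?thesis using assms line_through_PtY_PtZ by auto
next
  fix k i assume "e1 = PtZ k" "e2 = PtX i"
  then show ?thesis using assms by (intro exI[of _ "LnXZ i k"]) (auto simp: is_line_def)
next
  fix k j assume "e1 = PtZ k" "e2 = PtY j"
  then show ?thesis using assms line_through_PtY_PtZ[of j m k q p c] by auto
next
  fix k k' assume "e1 = PtZ k" "e2 = PtZ k'"
  then show ?thesis by (intro exI[of _ LnZ]) (auto simp: is_line_def)
qed

lemma line_has_point_elem: assumes "in_range q m p e" "is_line e" "0 < q" "0 < m"
  shows "\<exists>e'. in_range q m p e' \<and> is_point e' \<and> incident c q e' e"
  using assms
proof (cases e)
  case LnX then show ?thesis using assms by (intro exI[of _ "PtX 0"]) auto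
next
  case LnY then show ?thesis using assms by (intro exI[of _ "PtY 0"]) auto
next
  case LnZ then show ?thesis using assms by (intro exI[of _ "PtZ 0"]) auto
next
  case (LnXZ i k) then show ?thesis using assms by (intro exI[of _ "PtX i"]) auto
next
  case (LnXY i j) then show ?thesis using assms by (intro exI[of _ "PtX i"]) auto
next
  case (LnYZ j k) then show ?thesis using assms by (intro exI[of _ "PtZ k"]) auto
next
  case (LnPad l) then show ?thesis using assms by (intro exI[of _ "PtX 0"]) auto
qed (auto simp: is_line_def)

definition elems :: "nat \<Rightarrow> nat \<Rightarrow> nat \<Rightarrow> elem list" where
  "elems q m p = [Bot] @ map PtX [0..<q] @ map PtY [0..<m] @ map PtZ [0..<q] @ [LnX, LnY, LnZ]
     @ map (\<lambda>(i,k). LnXZ i k) (List.product [0..<q] [0..<q])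
     @ map (\<lambda>(i,j). LnXY i j) (List.product [0..<q] [0..<m])
     @ map (\<lambda>(j,k). LnYZ j k) (List.product [0..<m] [0..<q])
     @ map LnPad [0..<p] @ [Top]"

lemma set_elems: "set (elems q m p) = {e. in_range q m p e}"
proof (intro set_eqI iffI)
  fix e assume "e \<in> {e. in_range q m p e}"
  then show "e \<in> set (elems q m p)" by (cases e) (auto simp: elems_def image_iff)
qed (auto simp: elems_def)

lemma distinct_elems: "distinct (elems q m p)"
  unfolding elems_def by (auto simp: distinct_map inj_on_def distinct_product)

definition num_elems :: "nat \<Rightarrow> nat \<Rightarrow> nat \<Rightarrow> nat" where
  "num_elems q m p = length (elems q m p)"

lemma num_elems_eq: "num_elems q m p = 5 + 2 * q + m + q * q + 2 * q * m + p"
  unfolding num_elems_def elems_def by (simp add: length_product)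

lemma elems_nth_inj:
  "x < num_elems q m p \<Longrightarrow> y < num_elems q m p \<Longrightarrow> elems q m p ! x = elems q m p ! y \<Longrightarrow> x = y"
  using distinct_elems[of q m p] unfolding num_elems_def by (simp add: nth_eq_iff_index_eq)

lemma in_range_elems_nth: "x < num_elems q m p \<Longrightarrow> in_range q m p (elems q m p ! x)"
  using set_elems[of q m p] nth_mem[of x "elems q m p"] unfolding num_elems_def by auto

lemma elems_index_exists: "in_range q m p e \<Longrightarrow> \<exists>x < num_elems q m p. elems q m p ! x = e"
  using set_elems[of q m p] unfolding num_elems_def by (metis in_set_conv_nth mem_Collect_eq)

lemma elems_nth_Bot_iff: "x < num_elems q m p \<Longrightarrow> elems q m p ! x = Bot \<longleftrightarrow> x = 0"
proof -
  have "elems q m p ! 0 = Bot" by (simp add: elems_def)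
  then show "x < num_elems q m p \<Longrightarrow> ?thesis"
    using elems_nth_inj[of x q m p 0] by (auto simp: num_elems_eq)
qed

lemma elems_nth_Top_iff:
  "x < num_elems q m p \<Longrightarrow> elems q m p ! x = Top \<longleftrightarrow> x = num_elems q m p - 1"
proof -
  have "elems q m p ! (num_elems q m p - 1) = Top"
    unfolding num_elems_def elems_def by (simp add: nth_append)
  then show "x < num_elems q m p \<Longrightarrow> ?thesis"
    using elems_nth_inj[of x q m p "num_elems q m p - 1"] by (auto simp: num_elems_eq)
qed

definition point_at :: "nat \<Rightarrow> nat \<Rightarrow> nat \<Rightarrow> nat \<Rightarrow> bool" where
  "point_at q m p x \<longleftrightarrow> x < num_elems q m p \<and> is_point (elems q m p ! x)"

definition incident_at :: "(nat \<Rightarrow> nat \<Rightarrow> nat) \<Rightarrow> nat \<Rightarrow> nat \<Rightarrow> nat \<Rightarrow> nat \<Rightarrow> nat \<Rightarrow> bool" where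
  "incident_at c q m p x y \<longleftrightarrow> incident c q (elems q m p ! x) (elems q m p ! y)"

definition array_lattice :: "(nat \<Rightarrow> nat \<Rightarrow> nat) \<Rightarrow> nat \<Rightarrow> nat \<Rightarrow> nat \<Rightarrow> nat \<Rightarrow> nat \<Rightarrow> bool" where
  "array_lattice c q m p =
     incidence_order (num_elems q m p) 0 (num_elems q m p - 1) (point_at q m p) (incident_at c q m p)"

lemma is_line_elems_nth_iff:
  "x < num_elems q m p \<Longrightarrow>
    is_line (elems q m p ! x) \<longleftrightarrow> x \<noteq> 0 \<and> x \<noteq> num_elems q m p - 1 \<and> \<not> point_at q m p x"
  unfolding is_line_def point_at_def using elems_nth_Bot_iff elems_nth_Top_iff by blast

lemma unique_line_at:
  assumes c: "latin_square q m c" and x: "point_at q m p x" and y: "point_at q m p y" and "x \<noteq> y"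
  shows "\<exists>!l. l < num_elems q m p \<and> l \<noteq> 0 \<and> l \<noteq> num_elems q m p - 1 \<and> \<not> point_at q m p l
    \<and> incident_at c q m p x l \<and> incident_at c q m p y l"
proof -
  let ?N = "num_elems q m p" and ?e = "elems q m p"
  have xn: "x < ?N" and yn: "y < ?N" using x y unfolding point_at_def by auto
  have ne: "?e ! x \<noteq> ?e ! y" using elems_nth_inj xn yn \<open>x \<noteq> y\<close> by blast
  obtain e where e: "in_range q m p e" "is_line e" "incident c q (?e ! x) e" "incident c q (?e ! y) e"
    using common_line_exists in_range_elems_nth xn yn x y unfolding point_at_def by blast
  obtain l where l: "l < ?N" "?e ! l = e" using elems_index_exists e(1) by blast
  show ?thesis
  proof (rule ex1I[of _ l])
    fix l' assume l': "l' < ?N \<and> l' \<noteq> 0 \<and> l' \<noteq> ?N - 1 \<and> \<not> point_at q m p l'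
      \<and> incident_at c q m p x l' \<and> incident_at c q m p y l'"
    then have "?e ! l' = e"
      using common_line_unique[OF c _ _ ne in_range_elems_nth _ _ e(1) e(3) e(4)] x y
      unfolding point_at_def incident_at_def by blast
    then show "l' = l" using elems_nth_inj l l' by blast
  qed (use l e is_line_elems_nth_iff in \<open>auto simp: incident_at_def\<close>)
qed

lemma linear_space_array_lattice:
  assumes c: "latin_square q m c" and "0 < q" "0 < m"
  shows "linear_space (num_elems q m p) 0 (num_elems q m p - 1) (point_at q m p) (incident_at c q m p)"
proof
  let ?N = "num_elems q m p" and ?e = "elems q m p"
  have line_iff: "\<And>x. x < ?N \<Longrightarrow> is_line (?e ! x) \<longleftrightarrow> x \<noteq> 0 \<and> x \<noteq> ?N - 1 \<and> \<not> point_at q m p x"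
    by (rule is_line_elems_nth_iff)
  have index: "\<And>e. in_range q m p e \<Longrightarrow> \<exists>x < ?N. ?e ! x = e" by (rule elems_index_exists)
  show "0 < ?N" "?N - 1 < ?N" "0 \<noteq> ?N - 1" by (auto simp: num_elems_eq)
  show "x < ?N \<and> x \<noteq> 0 \<and> x \<noteq> ?N - 1" if "point_at q m p x" for x
    using that elems_nth_Bot_iff elems_nth_Top_iff unfolding point_at_def by fastforce
  show "\<exists>x. point_at q m p x \<and> incident_at c q m p x l"
    if l: "l < ?N" "l \<noteq> 0" "l \<noteq> ?N - 1" "\<not> point_at q m p l" for l
  proof -
    obtain e where "in_range q m p e" "is_point e" "incident c q e (?e ! l)"
      using line_has_point_elem[OF in_range_elems_nth[OF l(1)]] line_iff[OF l(1)] l assms by blast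
    then show ?thesis using index unfolding point_at_def incident_at_def by blast
  qed
  show "\<exists>!l. l < ?N \<and> l \<noteq> 0 \<and> l \<noteq> ?N - 1 \<and> \<not> point_at q m p l \<and> incident_at c q m p x l
      \<and> incident_at c q m p y l"
    if "point_at q m p x" "point_at q m p y" "x \<noteq> y" for x y
    using unique_line_at[OF c that] .
  show "\<exists>x y. point_at q m p x \<and> point_at q m p y \<and> x \<noteq> y"
  proof -
    obtain x y where "x < ?N" "?e ! x = PtX 0" "y < ?N" "?e ! y = PtY 0"
      using index[of "PtX 0"] index[of "PtY 0"] assms by auto
    then show ?thesis unfolding point_at_def by force
  qed
  show "\<exists>l l'. l < ?N \<and> l \<noteq> 0 \<and> l \<noteq> ?N - 1 \<and> \<not> point_at q m p l \<and>
      l' < ?N \<and> l' \<noteq> 0 \<and> l' \<noteq> ?N - 1 \<and> \<not> point_at q m p l' \<and> l \<noteq> l'"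
  proof -
    obtain l l' where l: "l < ?N" "?e ! l = LnX" "l' < ?N" "?e ! l' = LnY"
      using index[of LnX] index[of LnY] by auto
    then have "is_line (?e ! l)" "is_line (?e ! l')" "l \<noteq> l'" by (auto simp: is_line_def)
    then show ?thesis using l line_iff by blast
  qed
qed

definition svi_lattices :: "nat \<Rightarrow> (nat \<Rightarrow> nat \<Rightarrow> bool) set" where
  "svi_lattices n = {le. lattice_on n le \<and> semimodular_on n le \<and> vert_indecomposable n le}"

lemma array_lattice_in_svi_lattices:
  assumes "latin_square q m c" "0 < q" "0 < m"
  shows "array_lattice c q m p \<in> svi_lattices (num_elems q m p)"
proof -
  interpret linear_space "num_elems q m p" 0 "num_elems q m p - 1" "point_at q m p" "incident_at c q m p"
    using linear_space_array_lattice assms .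
  show ?thesis
    unfolding array_lattice_def svi_lattices_def using lattice_on_le semimodular_on_le vert_indecomposable_le
    by blast
qed

section \<open>Counting Latin rectangles\<close>

lemma card_mult_le_of_inj_on_Sigma:
  assumes "finite G" and X: "\<And>g. g \<in> G \<Longrightarrow> finite (X g) \<and> N \<le> card (X g)"
    and inj: "inj_on F (Sigma G X)" and sub: "F ` Sigma G X \<subseteq> T" and "finite T"
  shows "card G * N \<le> card T"
proof -
  have "card G * N = (\<Sum>g\<in>G. N)" by simp
  also have "\<dots> \<le> (\<Sum>g\<in>G. card (X g))" using X by (intro sum_mono) auto
  also have "\<dots> = card (Sigma G X)" using \<open>finite G\<close> X by (simp add: card_SigmaI)
  also have "\<dots> = card (F ` Sigma G X)" using inj by (simp add: card_image)
  also have "\<dots> \<le> card T" using sub \<open>finite T\<close> by (simp add: card_mono)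
  finally show ?thesis .
qed

lemma fun_upd_PiE_lessThan_inject:
  fixes s :: nat
  assumes "g \<in> {..<s} \<rightarrow>\<^sub>E A" "g' \<in> {..<s} \<rightarrow>\<^sub>E A'" "g(s := x) = g'(s := x')"
  shows "g = g' \<and> x = x'"
proof
  show "x = x'" using fun_cong[OF assms(3), of s] by simp
  show "g = g'"
  proof
    fix k
    show "g k = g' k"
    proof (cases "k < s")
      case True
      then have "k \<noteq> s" by simp
      then show ?thesis using fun_cong[OF assms(3), of k] by simp
    next
      case False
      then show ?thesis using assms(1,2) by (metis PiE_arb lessThan_iff)
    qed
  qed
qed

definition inj_choices :: "nat \<Rightarrow> nat \<Rightarrow> (nat \<Rightarrow> nat set) \<Rightarrow> (nat \<Rightarrow> nat) set" where
  "inj_choices s m A = {g \<in> {..<s} \<rightarrow>\<^sub>E {..<m}. inj_on g {..<s} \<and> (\<forall>k<s. g k \<in> A k)}"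

lemma finite_inj_choices: "finite (inj_choices s m A)"
  unfolding inj_choices_def by (rule finite_subset[of _ "{..<s} \<rightarrow>\<^sub>E {..<m}"]) (auto intro!: finite_PiE)

lemma fun_upd_in_inj_choices:
  assumes g: "g \<in> inj_choices s m A" and x: "x \<in> A s" "x \<notin> g ` {..<s}" "x < m"
  shows "g(s := x) \<in> inj_choices (Suc s) m A"
proof -
  have "g \<in> {..<s} \<rightarrow>\<^sub>E {..<m}" "inj_on g {..<s}" "\<forall>k<s. g k \<in> A k"
    using g unfolding inj_choices_def by auto
  then show ?thesis unfolding inj_choices_def
    using x by (auto simp: PiE_def extensional_def Pi_def inj_on_def lessThan_Suc less_Suc_eq)
qed

lemma card_inj_choices_ge:
  assumes "\<forall>k<s. A k \<subseteq> {..<m}" "\<forall>k<s. N + s \<le> card (A k)"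
  shows "N ^ s \<le> card (inj_choices s m A)"
  using assms
proof (induction s)
  case 0
  have "inj_choices 0 m A = {\<lambda>_. undefined}" unfolding inj_choices_def by auto
  then show ?case by simp
next
  case (Suc s)
  let ?X = "\<lambda>g. A s - g ` {..<s}"
  have As: "A s \<subseteq> {..<m}" "N + Suc s \<le> card (A s)" using Suc.prems by auto
  have "\<forall>k<s. A k \<subseteq> {..<m}" "\<forall>k<s. N + s \<le> card (A k)"
    using Suc.prems by (auto, meson Suc_leD less_SucI)
  then have IH: "N ^ s \<le> card (inj_choices s m A)" by (rule Suc.IH)
  have "card (inj_choices s m A) * N \<le> card (inj_choices (Suc s) m A)"
  proof (rule card_mult_le_of_inj_on_Sigma[OF finite_inj_choices _ _ _ finite_inj_choices])
    fix g
    have "card (A s) - card (g ` {..<s}) \<le> card (?X g)" by (rule diff_card_le_card_Diff) simp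
    moreover have "card (g ` {..<s}) \<le> s" using card_image_le[of "{..<s}" g] by simp
    moreover have "finite (?X g)" using As(1) finite_subset by blast
    ultimately show "finite (?X g) \<and> N \<le> card (?X g)" using As(2) by linarith
  next
    show "inj_on (\<lambda>(g, x). g(s := x)) (Sigma (inj_choices s m A) ?X)"
    proof (rule inj_onI, clarsimp)
      fix g x g' x' assume "g \<in> inj_choices s m A" "g' \<in> inj_choices s m A" "g(s := x) = g'(s := x')"
      then show "g = g' \<and> x = x'" unfolding inj_choices_def by (blast dest: fun_upd_PiE_lessThan_inject)
    qed
    show "(\<lambda>(g, x). g(s := x)) ` Sigma (inj_choices s m A) ?X \<subseteq> inj_choices (Suc s) m A"
    proof clarsimp
      fix g x assume "g \<in> inj_choices s m A" "x \<in> A s" "x \<notin> g ` {..<s}"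
      then show "g(s := x) \<in> inj_choices (Suc s) m A" using As(1) by (intro fun_upd_in_inj_choices) auto
    qed
  qed
  then have "N ^ s * N \<le> card (inj_choices (Suc s) m A)" using IH by (meson le_trans mult_le_mono1)
  then show ?case by (simp add: mult.commute)
qed

definition latin_rects :: "nat \<Rightarrow> nat \<Rightarrow> nat \<Rightarrow> (nat \<Rightarrow> nat \<Rightarrow> nat) set" where
  "latin_rects q m r = {c \<in> {..<r} \<rightarrow>\<^sub>E ({..<q} \<rightarrow>\<^sub>E {..<m}).
     (\<forall>i<r. inj_on (c i) {..<q}) \<and> (\<forall>k<q. inj_on (\<lambda>i. c i k) {..<r})}"

lemma finite_latin_rects: "finite (latin_rects q m r)"
  unfolding latin_rects_def
  by (rule finite_subset[of _ "{..<r} \<rightarrow>\<^sub>E ({..<q} \<rightarrow>\<^sub>E {..<m})"]) (auto intro!: finite_PiE)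

lemma fun_upd_in_latin_rects:
  assumes c: "c \<in> latin_rects q m r" and g: "g \<in> inj_choices q m (\<lambda>k. {..<m} - (\<lambda>i. c i k) ` {..<r})"
  shows "c(r := g) \<in> latin_rects q m (Suc r)"
proof -
  have cp: "c \<in> {..<r} \<rightarrow>\<^sub>E ({..<q} \<rightarrow>\<^sub>E {..<m})" "\<forall>i<r. inj_on (c i) {..<q}"
    "\<forall>k<q. inj_on (\<lambda>i. c i k) {..<r}" using c unfolding latin_rects_def by auto
  have gp: "g \<in> {..<q} \<rightarrow>\<^sub>E {..<m}" "inj_on g {..<q}" "\<forall>k<q. g k \<notin> (\<lambda>i. c i k) ` {..<r}"
    using g unfolding inj_choices_def by auto
  show ?thesis unfolding latin_rects_def
  proof (intro CollectI conjI allI impI)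
    show "c(r := g) \<in> {..<Suc r} \<rightarrow>\<^sub>E ({..<q} \<rightarrow>\<^sub>E {..<m})"
      using cp(1) gp(1) by (auto simp: PiE_def extensional_def Pi_def)
    fix i assume "i < Suc r" then show "inj_on ((c(r := g)) i) {..<q}" using cp gp by (cases "i = r") auto
  next
    fix k assume k: "k < q"
    show "inj_on (\<lambda>i. (c(r := g)) i k) {..<Suc r}"
      using cp(3) k gp(3) lessThan_Suc unfolding inj_on_def by (auto, (metis image_eqI lessThan_iff)+)
  qed
qed

text \<open>A Latin rectangle with \<open>r < q\<close> rows over \<open>m \<ge> 3 q\<close> symbols has at least \<open>q ^ q\<close>
  extensions by a row: each entry of the new row avoids the \<open>r\<close> entries above it and the
  previous entries of its row, leaving at least \<open>q\<close> choices.\<close>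

lemma card_latin_rects_ge:
  assumes "r \<le> q" "3 * q \<le> m"
  shows "(q ^ q) ^ r \<le> card (latin_rects q m r)"
  using assms
proof (induction r)
  case 0
  have "latin_rects q m 0 = {\<lambda>_. undefined}" unfolding latin_rects_def by auto
  then show ?case by simp
next
  case (Suc r)
  let ?X = "\<lambda>c. inj_choices q m (\<lambda>k. {..<m} - (\<lambda>i. c i k) ` {..<r})"
  have IH: "(q ^ q) ^ r \<le> card (latin_rects q m r)" using Suc by simp
  have "card (latin_rects q m r) * q ^ q \<le> card (latin_rects q m (Suc r))"
  proof (rule card_mult_le_of_inj_on_Sigma[OF finite_latin_rects _ _ _ finite_latin_rects])
    fix c :: "nat \<Rightarrow> nat \<Rightarrow> nat"
    have "q + q \<le> card ({..<m} - (\<lambda>i. c i k) ` {..<r})" for k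
    proof -
      have "card ((\<lambda>i. c i k) ` {..<r}) \<le> r" using card_image_le[of "{..<r}"] by simp
      moreover have "card {..<m} - card ((\<lambda>i. c i k) ` {..<r}) \<le> card ({..<m} - (\<lambda>i. c i k) ` {..<r})"
        by (rule diff_card_le_card_Diff) simp
      ultimately show ?thesis using Suc.prems by simp
    qed
    then show "finite (?X c) \<and> q ^ q \<le> card (?X c)"
      using card_inj_choices_ge[of q "\<lambda>k. {..<m} - (\<lambda>i. c i k) ` {..<r}" m q] finite_inj_choices by auto
  next
    show "inj_on (\<lambda>(c, g). c(r := g)) (Sigma (latin_rects q m r) ?X)"
    proof (rule inj_onI, clarsimp)
      fix c g c' g' assume "c \<in> latin_rects q m r" "c' \<in> latin_rects q m r" "c(r := g) = c'(r := g')"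
      then show "c = c' \<and> g = g'" unfolding latin_rects_def by (blast dest: fun_upd_PiE_lessThan_inject)
    qed
    show "(\<lambda>(c, g). c(r := g)) ` Sigma (latin_rects q m r) ?X \<subseteq> latin_rects q m (Suc r)"
      by (auto intro: fun_upd_in_latin_rects)
  qed
  then have "(q ^ q) ^ r * q ^ q \<le> card (latin_rects q m (Suc r))"
    using IH by (meson le_trans mult_le_mono1)
  then show ?case by (simp add: mult.commute)
qed

section \<open>Recovering the array from its lattice\<close>

definition has_two_upper_bounds :: "(nat \<Rightarrow> nat \<Rightarrow> bool) \<Rightarrow> nat \<Rightarrow> nat \<Rightarrow> nat \<Rightarrow> bool" where
  "has_two_upper_bounds le a b d \<longleftrightarrow>
     (\<exists>w w'. w \<noteq> w' \<and> (le a w \<and> le b w \<and> le d w) \<and> (le a w' \<and> le b w' \<and> le d w'))"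

lemma has_two_upper_bounds_iso:
  assumes f: "bij_betw f C C" and iso: "\<forall>x\<in>C. \<forall>y\<in>C. le0 x y \<longleftrightarrow> le (f x) (f y)"
    and "\<forall>x y. le0 x y \<longrightarrow> x \<in> C \<and> y \<in> C" and "\<forall>x y. le x y \<longrightarrow> x \<in> C \<and> y \<in> C"
    and "a \<in> C" "b \<in> C" "d \<in> C"
  shows "has_two_upper_bounds le0 a b d \<longleftrightarrow> has_two_upper_bounds le (f a) (f b) (f d)"
proof
  assume "has_two_upper_bounds le0 a b d"
  then obtain w w' where "w \<noteq> w'" "le0 a w" "le0 b w" "le0 d w" "le0 a w'" "le0 b w'" "le0 d w'"
    unfolding has_two_upper_bounds_def by blast
  moreover have "f w \<noteq> f w'" using \<open>w \<noteq> w'\<close> f assms(3) \<open>le0 a w\<close> \<open>le0 a w'\<close>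
    by (metis bij_betw_inv_into_left)
  ultimately show "has_two_upper_bounds le (f a) (f b) (f d)"
    unfolding has_two_upper_bounds_def using iso assms(3,5-7) by blast
next
  assume "has_two_upper_bounds le (f a) (f b) (f d)"
  then obtain w w' where w: "w \<noteq> w'" "le (f a) w" "le (f b) w" "le (f d) w"
    "le (f a) w'" "le (f b) w'" "le (f d) w'"
    unfolding has_two_upper_bounds_def by blast
  then have "w \<in> f ` C" "w' \<in> f ` C" using assms(4) f unfolding bij_betw_def by auto
  then obtain u u' where "u \<in> C" "u' \<in> C" "w = f u" "w' = f u'" by blast
  then show "has_two_upper_bounds le0 a b d"
    unfolding has_two_upper_bounds_def using w iso assms(5-7) by metis
qed

definition elem_index :: "nat \<Rightarrow> nat \<Rightarrow> nat \<Rightarrow> elem \<Rightarrow> nat" where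
  "elem_index q m p e = (SOME x. x < num_elems q m p \<and> elems q m p ! x = e)"

lemma elem_index:
  "in_range q m p e \<Longrightarrow> elem_index q m p e < num_elems q m p \<and> elems q m p ! elem_index q m p e = e"
  unfolding elem_index_def using elems_index_exists[of q m p e] by (rule someI_ex)

lemma array_lattice_iff:
  "array_lattice c q m p x y \<longleftrightarrow> x < num_elems q m p \<and> y < num_elems q m p \<and>
     (x = y \<or> elems q m p ! x = Bot \<or> elems q m p ! y = Top \<or>
      (is_point (elems q m p ! x) \<and> is_line (elems q m p ! y) \<and> incident c q (elems q m p ! x) (elems q m p ! y)))"
  unfolding array_lattice_def incidence_order_def incident_at_def
  using elems_nth_Bot_iff elems_nth_Top_iff is_line_elems_nth_iff[of y q m p] point_at_def by auto

lemma array_lattice_point_le_iff: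
  assumes "in_range q m p e" "is_point e"
  shows "array_lattice c q m p (elem_index q m p e) w \<longleftrightarrow> w < num_elems q m p \<and>
    (elems q m p ! w = e \<or> elems q m p ! w = Top \<or>
     (is_line (elems q m p ! w) \<and> incident c q e (elems q m p ! w)))"
proof -
  let ?x = "elem_index q m p e"
  have x: "?x < num_elems q m p" "elems q m p ! ?x = e" using elem_index[OF assms(1)] by auto
  have "?x = w \<longleftrightarrow> w < num_elems q m p \<and> elems q m p ! w = e" using x elems_nth_inj by metis
  moreover have "e \<noteq> Bot" using assms(2) by auto
  ultimately show ?thesis unfolding array_lattice_iff using x assms(2) by auto
qed

lemma upper_bound_of_XYZ_iff:
  "(e = PtX i \<or> e = Top \<or> (is_line e \<and> incident c q (PtX i) e)) \<and>
   (e = PtY j \<or> e = Top \<or> (is_line e \<and> incident c q (PtY j) e)) \<and>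
   (e = PtZ k \<or> e = Top \<or> (is_line e \<and> incident c q (PtZ k) e)) \<longleftrightarrow>
   e = Top \<or> (e = LnXZ i k \<and> j = c i k)"
  by (cases e) (auto simp: is_line_def)

text \<open>The points \<open>X\<^sub>i\<close>, \<open>Y\<^sub>j\<close>, \<open>Z\<^sub>k\<close> have an upper bound below the top iff they are collinear,
  so the lattice determines the array \<open>c\<close>.\<close>

lemma array_lattice_common_upper_bound_iff:
  assumes "i < q" "k < q" "j < m"
  shows "array_lattice c q m p (elem_index q m p (PtX i)) w \<and> array_lattice c q m p (elem_index q m p (PtY j)) w
      \<and> array_lattice c q m p (elem_index q m p (PtZ k)) w
    \<longleftrightarrow> w < num_elems q m p \<and> (elems q m p ! w = Top \<or> (elems q m p ! w = LnXZ i k \<and> j = c i k))"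
proof -
  have X: "array_lattice c q m p (elem_index q m p (PtX i)) w \<longleftrightarrow> w < num_elems q m p \<and>
      (elems q m p ! w = PtX i \<or> elems q m p ! w = Top \<or>
       (is_line (elems q m p ! w) \<and> incident c q (PtX i) (elems q m p ! w)))"
    using assms by (intro array_lattice_point_le_iff) auto
  have Y: "array_lattice c q m p (elem_index q m p (PtY j)) w \<longleftrightarrow> w < num_elems q m p \<and>
      (elems q m p ! w = PtY j \<or> elems q m p ! w = Top \<or>
       (is_line (elems q m p ! w) \<and> incident c q (PtY j) (elems q m p ! w)))"
    using assms by (intro array_lattice_point_le_iff) auto
  have Z: "array_lattice c q m p (elem_index q m p (PtZ k)) w \<longleftrightarrow> w < num_elems q m p \<and>
      (elems q m p ! w = PtZ k \<or> elems q m p ! w = Top \<or>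
       (is_line (elems q m p ! w) \<and> incident c q (PtZ k) (elems q m p ! w)))"
    using assms by (intro array_lattice_point_le_iff) auto
  have "(n \<and> A) \<and> (n \<and> B) \<and> (n \<and> C) \<longleftrightarrow> n \<and> D" if "A \<and> B \<and> C \<longleftrightarrow> D" for n A B C D
    using that by blast
  from this[OF upper_bound_of_XYZ_iff] show ?thesis unfolding X Y Z .
qed

lemma has_two_upper_bounds_array_lattice_iff:
  assumes "i < q" "k < q" "j < m"
  shows "has_two_upper_bounds (array_lattice c q m p)
      (elem_index q m p (PtX i)) (elem_index q m p (PtY j)) (elem_index q m p (PtZ k)) \<longleftrightarrow> j = c i k"
    (is "has_two_upper_bounds ?le ?x ?y ?z \<longleftrightarrow> _")
proof
  assume "has_two_upper_bounds ?le ?x ?y ?z"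
  then obtain w w' where "w \<noteq> w'" "?le ?x w \<and> ?le ?y w \<and> ?le ?z w" "?le ?x w' \<and> ?le ?y w' \<and> ?le ?z w'"
    unfolding has_two_upper_bounds_def by blast
  then have "w \<noteq> w'" "w < num_elems q m p" "w' < num_elems q m p"
    "elems q m p ! w = Top \<or> (elems q m p ! w = LnXZ i k \<and> j = c i k)"
    "elems q m p ! w' = Top \<or> (elems q m p ! w' = LnXZ i k \<and> j = c i k)"
    unfolding array_lattice_common_upper_bound_iff[OF assms] by simp_all
  then show "j = c i k" using elems_nth_inj[of w q m p w'] by auto
next
  assume "j = c i k"
  have top: "elem_index q m p Top < num_elems q m p" "elems q m p ! elem_index q m p Top = Top"
    and line: "elem_index q m p (LnXZ i k) < num_elems q m p"
      "elems q m p ! elem_index q m p (LnXZ i k) = LnXZ i k"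
    using elem_index[of q m p Top] elem_index[of q m p "LnXZ i k"] assms by auto
  have "elem_index q m p Top \<noteq> elem_index q m p (LnXZ i k)"
  proof
    assume "elem_index q m p Top = elem_index q m p (LnXZ i k)"
    then have "Top = LnXZ i k" using top(2) line(2) by simp
    then show False by simp
  qed
  then show "has_two_upper_bounds ?le ?x ?y ?z"
    unfolding has_two_upper_bounds_def array_lattice_common_upper_bound_iff[OF assms]
    using top line \<open>j = c i k\<close>
    by (intro exI[of _ "elem_index q m p Top"] exI[of _ "elem_index q m p (LnXZ i k)"]) simp
qed

definition point_elems :: "nat \<Rightarrow> nat \<Rightarrow> elem set" where
  "point_elems q m = PtX ` {..<q} \<union> PtY ` {..<m} \<union> PtZ ` {..<q}"

lemma finite_point_elems: "finite (point_elems q m)"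
  unfolding point_elems_def by simp

lemma card_point_elems_le: "card (point_elems q m) \<le> 2 * q + m"
proof -
  have "card (point_elems q m) \<le> card (PtX ` {..<q}) + card (PtY ` {..<m}) + card (PtZ ` {..<q})"
    unfolding point_elems_def by (meson card_Un_le add_right_mono order_trans)
  also have "\<dots> \<le> q + m + q"
    using card_image_le[of "{..<q}" PtX] card_image_le[of "{..<m}" PtY] card_image_le[of "{..<q}" PtZ]
    by simp
  finally show ?thesis by simp
qed

definition decode_array :: "nat \<Rightarrow> nat \<Rightarrow> (nat \<Rightarrow> nat \<Rightarrow> bool) \<Rightarrow> (elem \<Rightarrow> nat) \<Rightarrow> nat \<Rightarrow> nat \<Rightarrow> nat" where
  "decode_array q m le h = (\<lambda>i\<in>{..<q}. \<lambda>k\<in>{..<q}.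
     THE j. j < m \<and> has_two_upper_bounds le (h (PtX i)) (h (PtY j)) (h (PtZ k)))"

lemma decode_array_cong:
  assumes "\<And>i j k. i < q \<Longrightarrow> j < m \<Longrightarrow> k < q \<Longrightarrow>
    has_two_upper_bounds le (h (PtX i)) (h (PtY j)) (h (PtZ k)) \<longleftrightarrow>
    has_two_upper_bounds le' (h' (PtX i)) (h' (PtY j)) (h' (PtZ k))"
  shows "decode_array q m le h = decode_array q m le' h'"
  unfolding decode_array_def using assms by (intro restrict_ext arg_cong[where f = The] ext) auto

lemma latin_rects_latin_square: "c \<in> latin_rects q m q \<Longrightarrow> latin_square q m c"
  unfolding latin_rects_def latin_square_def by (auto simp: PiE_def Pi_def)

lemma decode_array_lattice:
  assumes c: "c \<in> latin_rects q m q"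
  shows "decode_array q m (array_lattice c q m p) (elem_index q m p) = c"
proof (intro ext)
  fix i k
  show "decode_array q m (array_lattice c q m p) (elem_index q m p) i k = c i k"
  proof (cases "i < q \<and> k < q")
    case True
    then have "c i k < m" using latin_rects_latin_square[OF c] unfolding latin_square_def by auto
    then have "(THE j. j < m \<and> has_two_upper_bounds (array_lattice c q m p) (elem_index q m p (PtX i))
        (elem_index q m p (PtY j)) (elem_index q m p (PtZ k))) = c i k"
      using has_two_upper_bounds_array_lattice_iff True by (intro the_equality) auto
    then show ?thesis unfolding decode_array_def using True by simp
  next
    case False
    have P: "c \<in> {..<q} \<rightarrow>\<^sub>E ({..<q} \<rightarrow>\<^sub>E {..<m})" using c unfolding latin_rects_def by simp
    show ?thesis
    proof (cases "i < q")
      case True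
      then have "c i \<in> {..<q} \<rightarrow>\<^sub>E {..<m}" using P by auto
      then have "c i k = undefined" using \<open>\<not> (i < q \<and> k < q)\<close> True by (metis PiE_arb lessThan_iff)
      then show ?thesis unfolding decode_array_def using True False by simp
    next
      case False
      then have "c i = undefined" using P by (metis PiE_arb lessThan_iff)
      then show ?thesis unfolding decode_array_def using False by simp
    qed
  qed
qed

lemma inj_on_array_lattice: "inj_on (\<lambda>c. array_lattice c q m p) (latin_rects q m q)"
  by (rule inj_on_inverseI[of _ "\<lambda>le. decode_array q m le (elem_index q m p)"]) (rule decode_array_lattice)

lemma array_lattice_carrier:
  "array_lattice c q m p x y \<Longrightarrow> x \<in> carrier_of (num_elems q m p) \<and> y \<in> carrier_of (num_elems q m p)"
  unfolding array_lattice_def incidence_order_def carrier_of_def by auto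

text \<open>A lattice isomorphic to that of \<open>c\<close> determines \<open>c\<close> once the images of the points are
  known, so each isomorphism class contains at most \<open>n ^ (2 q + m)\<close> of these lattices.\<close>

lemma iso_array_lattice_decode:
  assumes c: "c \<in> latin_rects q m q"
    and iso: "(le0, array_lattice c q m p) \<in> lat_iso_rel (num_elems q m p)"
    and le0: "\<forall>x y. le0 x y \<longrightarrow> x \<in> carrier_of (num_elems q m p) \<and> y \<in> carrier_of (num_elems q m p)"
  shows "\<exists>h \<in> point_elems q m \<rightarrow>\<^sub>E {..<num_elems q m p}. c = decode_array q m le0 h"
proof -
  let ?C = "carrier_of (num_elems q m p)"
  obtain f where f: "bij_betw f ?C ?C"
    and f_iso: "\<forall>x\<in>?C. \<forall>y\<in>?C. le0 x y \<longleftrightarrow> array_lattice c q m p (f x) (f y)"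
    using iso unfolding lat_iso_rel_def by auto
  let ?g = "inv_into ?C f"
  define h where "h = restrict (\<lambda>e. ?g (elem_index q m p e)) (point_elems q m)"
  have index: "elem_index q m p e \<in> ?C" if "e \<in> point_elems q m" for e
    using that elem_index unfolding point_elems_def carrier_of_def by fastforce
  have g: "?g x \<in> ?C" "f (?g x) = x" if "x \<in> ?C" for x
    using that f by (auto simp: bij_betw_def inv_into_into f_inv_into_f)
  have "h \<in> point_elems q m \<rightarrow>\<^sub>E {..<num_elems q m p}"
    unfolding h_def using index g(1) by (auto simp: carrier_of_def)
  moreover have "decode_array q m le0 h = decode_array q m (array_lattice c q m p) (elem_index q m p)"
  proof (rule decode_array_cong)
    fix i j k assume "i < q" "j < m" "k < q"
    then have pts: "PtX i \<in> point_elems q m" "PtY j \<in> point_elems q m" "PtZ k \<in> point_elems q m"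
      unfolding point_elems_def by auto
    show "has_two_upper_bounds le0 (h (PtX i)) (h (PtY j)) (h (PtZ k)) \<longleftrightarrow>
      has_two_upper_bounds (array_lattice c q m p)
        (elem_index q m p (PtX i)) (elem_index q m p (PtY j)) (elem_index q m p (PtZ k))"
      using has_two_upper_bounds_iso[OF f f_iso le0 _ g(1) g(1) g(1)] array_lattice_carrier index[OF pts(1)]
        index[OF pts(2)] index[OF pts(3)] pts g(2) unfolding h_def by auto
  qed
  ultimately show ?thesis using decode_array_lattice[OF c] by metis
qed

section \<open>Counting isomorphism classes\<close>

lemma card_le_card_quotient_mult:
  assumes "finite S" "F \<subseteq> S" "\<And>x. x \<in> F \<Longrightarrow> (x, x) \<in> R"
    and "\<And>x. x \<in> F \<Longrightarrow> card (R `` {x} \<inter> F) \<le> k"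
  shows "card F \<le> card (S // R) * k"
proof -
  have finF: "finite F" using assms(1,2) by (rule finite_subset[rotated])
  have finQ: "finite (F // R)" unfolding quotient_def using finF by simp
  have "F \<subseteq> (\<Union>K \<in> F // R. K \<inter> F)" using assms(3) unfolding quotient_def by blast
  then have "card F \<le> card (\<Union>K \<in> F // R. K \<inter> F)" using finF by (intro card_mono) auto
  also have "\<dots> \<le> (\<Sum>K \<in> F // R. card (K \<inter> F))" by (rule card_UN_le[OF finQ])
  also have "\<dots> \<le> (\<Sum>K \<in> F // R. k)" using assms(4) unfolding quotient_def by (intro sum_mono) auto
  also have "\<dots> = card (F // R) * k" by simp
  also have "card (F // R) \<le> card (S // R)"
    using assms(1,2) unfolding quotient_def by (intro card_mono) auto
  finally show ?thesis by simp
qed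

lemma finite_svi_lattices: "finite (svi_lattices n)"
proof (rule finite_subset)
  show "svi_lattices n \<subseteq> (\<lambda>r x y. (x, y) \<in> r) ` Pow ({..<n} \<times> {..<n})"
  proof
    fix le assume "le \<in> svi_lattices n"
    then have "le x y \<Longrightarrow> x < n \<and> y < n" for x y
      unfolding svi_lattices_def lattice_on_def carrier_of_def by blast
    then have "{(x, y). le x y} \<in> Pow ({..<n} \<times> {..<n})" by auto
    then show "le \<in> (\<lambda>r x y. (x, y) \<in> r) ` Pow ({..<n} \<times> {..<n})"
      by (intro image_eqI[of _ _ "{(x, y). le x y}"]) auto
  qed
qed simp

lemma card_latin_rects_le_s_vi:
  assumes "0 < q" "0 < m"
  shows "card (latin_rects q m q) \<le> s_vi (num_elems q m p) * num_elems q m p ^ (2 * q + m)"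
proof -
  let ?N = "num_elems q m p" and ?R = "lat_iso_rel (num_elems q m p)"
  let ?L = "\<lambda>c. array_lattice c q m p"
  define F where "F = ?L ` latin_rects q m q"
  have "card (latin_rects q m q) = card F" unfolding F_def using inj_on_array_lattice by (rule card_image[symmetric])
  also have "\<dots> \<le> card (svi_lattices ?N // ?R) * ?N ^ (2 * q + m)"
  proof (rule card_le_card_quotient_mult[OF finite_svi_lattices])
    show "F \<subseteq> svi_lattices ?N"
      unfolding F_def using array_lattice_in_svi_lattices latin_rects_latin_square assms by blast
    show "(le, le) \<in> ?R" for le
      unfolding lat_iso_rel_def by (auto intro!: exI[of _ id])
    fix le0 assume "le0 \<in> F"
    then have le0: "\<forall>x y. le0 x y \<longrightarrow> x \<in> carrier_of ?N \<and> y \<in> carrier_of ?N"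
      unfolding F_def using array_lattice_carrier by blast
    let ?H = "point_elems q m \<rightarrow>\<^sub>E {..<?N}"
    have "?R `` {le0} \<inter> F \<subseteq> (\<lambda>h. ?L (decode_array q m le0 h)) ` ?H"
    proof
      fix le assume "le \<in> ?R `` {le0} \<inter> F"
      then obtain c where "c \<in> latin_rects q m q" "le = ?L c" "(le0, ?L c) \<in> ?R" unfolding F_def by auto
      then show "le \<in> (\<lambda>h. ?L (decode_array q m le0 h)) ` ?H"
        using iso_array_lattice_decode[OF _ _ le0] by blast
    qed
    then have "card (?R `` {le0} \<inter> F) \<le> card ?H"
      using finite_point_elems by (meson card_image_le card_mono finite_PiE finite_imageI finite_lessThan order_trans)
    also have "\<dots> = ?N ^ card (point_elems q m)" by (simp add: card_PiE finite_point_elems)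
    also have "\<dots> \<le> ?N ^ (2 * q + m)"
      using card_point_elems_le by (intro power_increasing) (auto simp: num_elems_eq)
    finally show "card (?R `` {le0} \<inter> F) \<le> ?N ^ (2 * q + m)" .
  qed
  also have "card (svi_lattices ?N // ?R) = s_vi ?N" unfolding s_vi_def svi_lattices_def ..
  finally show ?thesis .
qed

text \<open>As \<open>q \<ge> 59049 = 3 ^ 10\<close> and \<open>9 q\<^sup>2 \<le> 10 (q\<^sup>2 - 15 q)\<close>, the factor \<open>3 ^ n\<close> is absorbed by
  \<open>q ^ (q\<^sup>2 - 15 q)\<close>, while \<open>n ^ (5 q) \<le> (q\<^sup>3) ^ (5 q) = q ^ (15 q)\<close>.\<close>

lemma three_pow_mult_le:
  fixes q n :: nat
  assumes q: "59049 \<le> q" and n: "n \<le> 9 * q^2"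
  shows "3 ^ n * n ^ (5 * q) \<le> q ^ (q * q)"
proof -
  have "9 * (q * q) \<le> q * (q * q)" using q by (intro mult_le_mono1) linarith
  then have "9 * q^2 \<le> q ^ 3" by (simp only: power2_eq_square power3_eq_cube mult.assoc)
  then have n_le: "n \<le> q ^ 3" using n by linarith
  have q150: "150 * q \<le> q * q" using q by (intro mult_le_mono1) linarith
  have "10 * (q * q - 15 * q) = 10 * (q * q) - 150 * q" by (simp add: diff_mult_distrib2)
  then have exp_le: "n \<le> 10 * (q * q - 15 * q)" using q150 n unfolding power2_eq_square by linarith
  have "15 * q \<le> q * q" using q150 by linarith
  have "(3::nat) ^ n \<le> (3 ^ 10) ^ (q * q - 15 * q)"
    unfolding power_mult[symmetric] using exp_le by (intro power_increasing) auto
  moreover have "n ^ (5 * q) \<le> (q ^ 3) ^ (5 * q)" using n_le by (intro power_mono) auto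
  ultimately have "3 ^ n * n ^ (5 * q) \<le> (3 ^ 10) ^ (q * q - 15 * q) * (q ^ 3) ^ (5 * q)"
    by (intro mult_mono) auto
  also have "\<dots> = (3 ^ 10) ^ (q * q - 15 * q) * q ^ (15 * q)"
    by (simp add: power_mult[symmetric])
  also have "\<dots> \<le> q ^ (q * q - 15 * q) * q ^ (15 * q)"
    using q by (intro mult_right_mono power_mono) auto
  also have "\<dots> = q ^ (q * q)"
    using \<open>15 * q \<le> q * q\<close> by (simp add: power_add[symmetric])
  finally show ?thesis .
qed

lemma exists_q_between:
  fixes n :: nat
  assumes n: "8 * 59049^2 \<le> n"
  shows "\<exists>q. 59049 \<le> q \<and> 8 * q^2 \<le> n \<and> n \<le> 9 * q^2"
proof -
  define q where "q = (LEAST q. n < 8 * (Suc q)^2)"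
  have ex: "n < 8 * (Suc n)^2" by (simp add: power2_eq_square)
  have lt: "n < 8 * (Suc q)^2" unfolding q_def by (rule LeastI[of "\<lambda>q. n < 8 * (Suc q)^2" n, OF ex])
  have min: "\<And>q'. q' < q \<Longrightarrow> \<not> n < 8 * (Suc q')^2" unfolding q_def by (rule not_less_Least)
  have q1: "59049 \<le> q"
  proof (rule ccontr)
    assume "\<not> 59049 \<le> q"
    then have "q < 59049" by simp
    then have "Suc q \<le> 59049" by auto
    then have "(Suc q)^2 \<le> 59049^2" by (rule power_mono) simp
    then have "8 * (Suc q)^2 \<le> 8 * 59049^2" by (rule mult_le_mono2)
    then show False using lt n by auto
  qed
  have lo: "8 * q^2 \<le> n"
  proof -
    obtain q' where q': "q = Suc q'" using q1 by (cases q) auto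
    then show ?thesis using min[of q'] by auto
  qed
  have hi: "n \<le> 9 * q^2"
  proof -
    have "8 * (Suc q)^2 \<le> 9 * q^2"
    proof -
      have "17 * q \<le> q * q" using q1 by (intro mult_le_mono1) linarith
      then have "16 * q + 8 \<le> q * q" using q1 by linarith
      moreover have "8 * (Suc q)^2 = 8 * (q * q) + 16 * q + 8" by (simp add: power2_eq_square algebra_simps)
      ultimately show ?thesis by (simp only: power2_eq_square; linarith)
    qed
    then show ?thesis using lt by auto
  qed
  show ?thesis using q1 lo hi by blast
qed

lemma three_pow_le_s_vi:
  assumes n: "8 * 59049^2 \<le> n"
  shows "3 ^ n \<le> s_vi n"
proof -
  obtain q where q: "59049 \<le> q" "8 * q^2 \<le> n" "n \<le> 9 * q^2" using exists_q_between[OF n] by blast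
  define m where "m = 3 * q"
  define p where "p = n - (5 + 5 * q + 7 * q^2)"
  have "5 + 5 * q + 7 * q^2 \<le> 8 * q^2"
  proof -
    have "6 * q \<le> q * q" using q(1) by (intro mult_le_mono1) linarith
    then have "5 + 5 * q \<le> q * q" using q(1) by linarith
    then show ?thesis by (simp add: power2_eq_square)
  qed
  then have N: "num_elems q m p = n"
    unfolding num_elems_eq m_def p_def using q(2) by (simp add: power2_eq_square algebra_simps)
  have "q ^ (q * q) \<le> card (latin_rects q m q)"
    using card_latin_rects_ge[of q q m] unfolding m_def by (simp add: power_mult[symmetric])
  also have "\<dots> \<le> s_vi n * n ^ (5 * q)"
    using card_latin_rects_le_s_vi[of q m p] N q(1) unfolding m_def by simp
  finally have "3 ^ n * n ^ (5 * q) \<le> s_vi n * n ^ (5 * q)"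
    using three_pow_mult_le[OF q(1) q(3)] by linarith
  moreover have "0 < n ^ (5 * q)" using n by simp
  ultimately show ?thesis by (meson mult_le_cancel2)
qed

theorem proposition3p9:
  shows "\<exists>n0::nat. \<forall>n\<ge>n0. (2.6797::real) ^ n \<le> real (s_vi n)"
proof (intro exI allI impI)
  fix n :: nat assume "8 * 59049^2 \<le> n"
  then have "(3::real) ^ n \<le> real (s_vi n)" using three_pow_le_s_vi by (metis of_nat_le_iff of_nat_numeral of_nat_power)
  moreover have "(2.6797::real) ^ n \<le> 3 ^ n" by (intro power_mono) auto
  ultimately show "(2.6797::real) ^ n \<le> real (s_vi n)" by linarith
qed

end
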